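(* Let $\omega\in\Omega$. Let $x\in\mathbb{Z}^2$ lie in an infinite $0$-cluster and $y\in\mathbb{Z}^2$ lie in an infinite $1$-cluster, and let $\ell_{xy}$ be a path of edges of $G$ from $x$ to $y$. Then the total number of crossings of $\ell_{xy}$ with infinite contours of $\phi(\omega)$ (i.e. the number of edges of $\ell_{xy}$, counted with multiplicity, crossed by an edge belonging to an infinite contour) is odd. In particular, if $\omega$ has both an infinite $0$-cluster and an infinite $1$-cluster, then $\phi(\omega)$ has an infinite contour.
   Context: Let $G$ be the square grid with vertex set $\mathbb{Z}^2$ and nearest-neighbour edges. The face of $G$ with lower-left corner $(m,n)$ is black if $m+n$ is even, white otherwise. $\Omega\subset\{0,1\}^{\mathbb{Z}^2}$ is the set of $\omega$ such that for every black face the states of its four vertices, listed clockwise from the lower-left corner, form one of $0000,1111,0011,1100,0110,1001$. A cluster of $\omega$ is a maximal $G$-connected set of vertices on which $\omega$ is constant ($0$- or $1$-cluster), infinite if it has infinitely many vertices. Let $\mathbb{L}_1$ have vertices $(m-\tfrac12,n+\tfrac12)$, $m,n$ both even, and $\mathbb{L}_2$ vertices $(m-\tfrac12,n+\tfrac12)$, $m,n$ both odd; in each, two vertices are joined by an edge (a segment of length $2$) iff at Euclidean distance $2$. Every edge of $G$ is crossed by exactly one edge of $\mathbb{L}_1\cup\mathbb{L}_2$. The center of each black face $F$ is the midpoint of exactly one edge $e_1$ of $\mathbb{L}_1$ and one edge $e_2$ of $\mathbb{L}_2$. Define $\phi(\omega)\in\{0,1\}^{E(\mathbb{L}_1)\cup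 E(\mathbb{L}_2)}$: if the configuration around $F$ is $0000$ or $1111$ both get $0$; if the two upper vertices share a state different from the two lower ones, the horizontal one of $e_1,e_2$ gets $1$, the vertical $0$; if the two left vertices share a state different from the two right ones, the vertical one gets $1$, the horizontal $0$. Edges with value $1$ are present; a contour is a connected component of the set of present edges, infinite if it has infinitely many edges. *)

theory Defs
  imports Main
begin

text \<open>Vertices of G are points of int x int. States: False = 0, True = 1.\<close>

type_synonym vtx = "int \<times> int"

definition adjG :: "vtx \<Rightarrow> vtx \<Rightarrow> bool" where
  "adjG u v \<longleftrightarrow> \<bar>fst u - fst v\<bar> + \<bar>snd u - snd v\<bar> = 1"

text \<open>Black face with lower-left corner (a,b): a+b even. Vertices clockwise from the
 lower-left: (a,b), (a,b+1), (a+1,b+1), (a+1,b).\<close>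

definition allowed_face :: "bool \<Rightarrow> bool \<Rightarrow> bool \<Rightarrow> bool \<Rightarrow> bool" where
  "allowed_face p q r s \<longleftrightarrow>
     (p, q, r, s) \<in> {(False, False, False, False), (True, True, True, True),
                     (False, False, True, True), (True, True, False, False),
                     (False, True, True, False), (True, False, False, True)}"

definition Omega :: "(vtx \<Rightarrow> bool) set" where
  "Omega = {\<omega>. \<forall>a b. even (a + b) \<longrightarrow>
      allowed_face (\<omega> (a, b)) (\<omega> (a, b + 1)) (\<omega> (a + 1, b + 1)) (\<omega> (a + 1, b))}"

definition cluster :: "(vtx \<Rightarrow> bool) \<Rightarrow> vtx \<Rightarrow> vtx set" where
  "cluster \<omega> x = {y. (\<lambda>u v. adjG u v \<and> \<omega> u = \<omega> v)\<^sup>*\<^sup>* x y}"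

definition in_infinite_cluster :: "(vtx \<Rightarrow> bool) \<Rightarrow> bool \<Rightarrow> vtx \<Rightarrow> bool" where
  "in_infinite_cluster \<omega> s x \<longleftrightarrow> \<omega> x = s \<and> infinite (cluster \<omega> x)"

text \<open>Dual lattices: the vertex (m - 1/2, n + 1/2) of L1 (m,n even) or L2 (m,n odd) is
 encoded by the integer pair (m,n).\<close>

definition dual_vertex :: "vtx \<Rightarrow> bool" where
  "dual_vertex p \<longleftrightarrow> even (fst p) = even (snd p)"

definition dual_edges :: "vtx set set" where
  "dual_edges = {{p, q} | p q. dual_vertex p \<and> dual_vertex q \<and>
      ((fst q = fst p + 2 \<and> snd q = snd p) \<or> (fst q = fst p \<and> snd q = snd p + 2))}"

text \<open>For the black face with lower-left (a,b) (a+b even) the horizontal dual edge through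
 its center is {(a,b),(a+2,b)} (real endpoints (a-1/2,b+1/2),(a+3/2,b+1/2)) and the vertical
 one is {(a+1,b-1),(a+1,b+1)} (real endpoints (a+1/2,b-1/2),(a+1/2,b+3/2)).\<close>

definition hdual :: "int \<Rightarrow> int \<Rightarrow> vtx set" where
  "hdual a b = {(a, b), (a + 2, b)}"

definition vdual :: "int \<Rightarrow> int \<Rightarrow> vtx set" where
  "vdual a b = {(a + 1, b - 1), (a + 1, b + 1)}"

text \<open>phi(omega): the set of dual edges with value 1.\<close>

definition present :: "(vtx \<Rightarrow> bool) \<Rightarrow> vtx set set" where
  "present \<omega> =
     {hdual a b | a b. even (a + b) \<and>
        \<omega> (a, b + 1) = \<omega> (a + 1, b + 1) \<and> \<omega> (a, b) = \<omega> (a + 1, b) \<and>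
        \<omega> (a, b + 1) \<noteq> \<omega> (a, b)}
   \<union> {vdual a b | a b. even (a + b) \<and>
        \<omega> (a, b) = \<omega> (a, b + 1) \<and> \<omega> (a + 1, b) = \<omega> (a + 1, b + 1) \<and>
        \<omega> (a, b) \<noteq> \<omega> (a + 1, b)}"

definition contour :: "(vtx \<Rightarrow> bool) \<Rightarrow> vtx set \<Rightarrow> vtx set set" where
  "contour \<omega> e =
     {f. (\<lambda>g h. g \<in> present \<omega> \<and> h \<in> present \<omega> \<and> g \<inter> h \<noteq> {})\<^sup>*\<^sup>* e f}"

definition in_infinite_contour :: "(vtx \<Rightarrow> bool) \<Rightarrow> vtx set \<Rightarrow> bool" where
  "in_infinite_contour \<omega> e \<longleftrightarrow> e \<in> present \<omega> \<and> infinite (contour \<omega> e)"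

definition crosses :: "vtx set \<Rightarrow> vtx set \<Rightarrow> bool" where
  "crosses d p \<longleftrightarrow> (\<exists>a b. even (a + b) \<and>
     ((d = hdual a b \<and> (p = {(a, b), (a, b + 1)} \<or> p = {(a + 1, b), (a + 1, b + 1)})) \<or>
      (d = vdual a b \<and> (p = {(a, b), (a + 1, b)} \<or> p = {(a, b + 1), (a + 1, b + 1)}))))"

definition Gpath :: "vtx list \<Rightarrow> bool" where
  "Gpath xs \<longleftrightarrow> xs \<noteq> [] \<and> (\<forall>i. Suc i < length xs \<longrightarrow> adjG (xs ! i) (xs ! Suc i))"

definition inf_crossings :: "(vtx \<Rightarrow> bool) \<Rightarrow> vtx list \<Rightarrow> nat" where
  "inf_crossings \<omega> xs = card {i. Suc i < length xs \<and>
     (\<exists>d. in_infinite_contour \<omega> d \<and> crosses d {xs ! i, xs ! Suc i})}"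

end

theory Submission
  imports Defs
begin

text \<open>
  The face constraints of \<open>\<Omega>\<close> force every vertex of the dual lattices to meet an even
  number of present edges. For a finite set \<open>K\<close> of present edges that is a union of
  contours, this makes the parity of the number of \<open>K\<close>-edges crossed by the horizontal ray
  from a vertex \<open>u\<close> of \<open>G\<close> to the right a function of \<open>u\<close> that flips exactly across the
  edges of \<open>G\<close> crossed by \<open>K\<close>; it vanishes far from \<open>K\<close>, hence on every infinite cluster.

  Along a path from an infinite 0-cluster to an infinite 1-cluster, \<open>\<omega>\<close> changes an odd
  number of times, and every change is crossed by exactly one present edge. Taking for \<open>K\<close>
  the union of the finitely many finite contours met by the path, the ray parity agrees at
  both ends of the path, so finite contours are crossed an even number of times and
  infinite contours an odd number of times.
\<close>

lemma hdual_eq_iff [simp]: "hdual a b = hdual c e \<longleftrightarrow> a = c \<and> b = e"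
  unfolding hdual_def by (auto simp: doubleton_eq_iff)

lemma vdual_eq_iff [simp]: "vdual a b = vdual c e \<longleftrightarrow> a = c \<and> b = e"
  unfolding vdual_def by (auto simp: doubleton_eq_iff)

lemma hdual_neq_vdual [simp]: "hdual a b \<noteq> vdual c e" "vdual c e \<noteq> hdual a b"
  unfolding vdual_def hdual_def by (auto simp: doubleton_eq_iff)

lemma mem_hdual_iff: "p \<in> hdual a b \<longleftrightarrow> p = (a, b) \<or> p = (a + 2, b)"
  by (simp add: hdual_def)

lemma mem_vdual_iff: "p \<in> vdual a b \<longleftrightarrow> p = (a + 1, b - 1) \<or> p = (a + 1, b + 1)"
  by (simp add: vdual_def)

lemma horizontal_edge_eq_iff:
  fixes i j a b :: int
  shows "{(i, j), (i + 1, j)} = {(a, b), (a, b + 1)} \<longleftrightarrow> False"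
    and "{(i, j), (i + 1, j)} = {(a + 1, b), (a + 1, b + 1)} \<longleftrightarrow> False"
    and "{(i, j), (i + 1, j)} = {(a, b), (a + 1, b)} \<longleftrightarrow> a = i \<and> b = j"
    and "{(i, j), (i + 1, j)} = {(a, b + 1), (a + 1, b + 1)} \<longleftrightarrow> a = i \<and> b + 1 = j"
  by (auto simp: doubleton_eq_iff)

lemma vertical_edge_eq_iff:
  fixes i j a b :: int
  shows "{(i, j), (i, j + 1)} = {(a, b), (a, b + 1)} \<longleftrightarrow> a = i \<and> b = j"
    and "{(i, j), (i, j + 1)} = {(a + 1, b), (a + 1, b + 1)} \<longleftrightarrow> a + 1 = i \<and> b = j"
    and "{(i, j), (i, j + 1)} = {(a, b), (a + 1, b)} \<longleftrightarrow> False"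
    and "{(i, j), (i, j + 1)} = {(a, b + 1), (a + 1, b + 1)} \<longleftrightarrow> False"
  by (auto simp: doubleton_eq_iff)

lemma crosses_horizontal_edge_iff:
  "crosses d {(i, j), (i + 1, j)} \<longleftrightarrow>
     even (i + j) \<and> d = vdual i j \<or> odd (i + j) \<and> d = vdual i (j - 1)"
proof -
  have "crosses d {(i, j), (i + 1, j)} \<longleftrightarrow>
      (\<exists>a b. even (a + b) \<and> d = vdual a b \<and> (a = i \<and> b = j \<or> a = i \<and> b + 1 = j))"
    unfolding crosses_def horizontal_edge_eq_iff by blast
  also have "\<dots> \<longleftrightarrow> even (i + j) \<and> d = vdual i j \<or> odd (i + j) \<and> d = vdual i (j - 1)"
    by (rule iffI) auto
  finally show ?thesis .
qed

lemma crosses_vertical_edge_iff: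
  "crosses d {(i, j), (i, j + 1)} \<longleftrightarrow>
     even (i + j) \<and> d = hdual i j \<or> odd (i + j) \<and> d = hdual (i - 1) j"
proof -
  have "crosses d {(i, j), (i, j + 1)} \<longleftrightarrow>
      (\<exists>a b. even (a + b) \<and> d = hdual a b \<and> (a = i \<and> b = j \<or> a + 1 = i \<and> b = j))"
    unfolding crosses_def vertical_edge_eq_iff by blast
  also have "\<dots> \<longleftrightarrow> even (i + j) \<and> d = hdual i j \<or> odd (i + j) \<and> d = hdual (i - 1) j"
    by (rule iffI) auto
  finally show ?thesis .
qed

lemma adjG_cases:
  assumes "adjG u v"
    and "\<And>i j. Q (i, j) (i + 1, j)" "\<And>i j. Q (i, j) (i, j + 1)"
    and "\<And>u v. Q u v \<Longrightarrow> Q v u"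
  shows "Q u v"
proof -
  obtain a b c e where u: "u = (a, b)" and v: "v = (c, e)" by fastforce
  from assms(1) have "\<bar>a - c\<bar> + \<bar>b - e\<bar> = 1" unfolding adjG_def u v by simp
  then have "c = a + 1 \<and> e = b \<or> a = c + 1 \<and> e = b \<or> c = a \<and> e = b + 1 \<or> c = a \<and> b = e + 1"
    by arith
  then show ?thesis unfolding u v using assms(2-4) by (elim disjE) auto
qed

lemma crosses_unique:
  assumes "adjG u v" "crosses d {u, v}" "crosses d' {u, v}"
  shows "d = d'"
proof -
  have "\<forall>d d'. crosses d {u, v} \<and> crosses d' {u, v} \<longrightarrow> d = d'"
    using assms(1)
  proof (rule adjG_cases)
    fix u v :: vtx
    assume "\<forall>d d'. crosses d {u, v} \<and> crosses d' {u, v} \<longrightarrow> d = d'"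
    then show "\<forall>d d'. crosses d {v, u} \<and> crosses d' {v, u} \<longrightarrow> d = d'"
      by (simp add: insert_commute)
  qed (auto simp: crosses_horizontal_edge_iff crosses_vertical_edge_iff)
  then show ?thesis using assms(2,3) by blast
qed

lemma finite_crossing_duals:
  assumes "adjG u v"
  shows "finite {d. crosses d {u, v}}"
proof (cases "\<exists>d0. crosses d0 {u, v}")
  case True
  then obtain d0 where "crosses d0 {u, v}" by blast
  then have "{d. crosses d {u, v}} \<subseteq> {d0}" using crosses_unique[OF assms] by blast
  then show ?thesis by (rule finite_subset) simp
qed simp

lemma allowed_face_iff:
  "allowed_face p q r s \<longleftrightarrow> (p \<noteq> q \<longleftrightarrow> s \<noteq> r) \<and> (p \<noteq> s \<longleftrightarrow> q \<noteq> r) \<and> \<not> (p \<noteq> q \<and> p \<noteq> s)"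
  unfolding allowed_face_def by (cases p; cases q; cases r; cases s) auto

lemma Omega_allowed_face:
  "\<omega> \<in> Omega \<Longrightarrow> even (a + b) \<Longrightarrow>
     allowed_face (\<omega> (a, b)) (\<omega> (a, b + 1)) (\<omega> (a + 1, b + 1)) (\<omega> (a + 1, b))"
  unfolding Omega_def by blast

lemma Omega_left_right_change_iff:
  "\<omega> \<in> Omega \<Longrightarrow> even (a + b) \<Longrightarrow>
     \<omega> (a, b) \<noteq> \<omega> (a, b + 1) \<longleftrightarrow> \<omega> (a + 1, b) \<noteq> \<omega> (a + 1, b + 1)"
  using Omega_allowed_face[of \<omega> a b] unfolding allowed_face_iff by auto

lemma Omega_bottom_top_change_iff:
  "\<omega> \<in> Omega \<Longrightarrow> even (a + b) \<Longrightarrow>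
     \<omega> (a, b) \<noteq> \<omega> (a + 1, b) \<longleftrightarrow> \<omega> (a, b + 1) \<noteq> \<omega> (a + 1, b + 1)"
  using Omega_allowed_face[of \<omega> a b] unfolding allowed_face_iff by auto

lemma hdual_in_present_iff:
  assumes "\<omega> \<in> Omega"
  shows "hdual a b \<in> present \<omega> \<longleftrightarrow> even (a + b) \<and> \<omega> (a, b) \<noteq> \<omega> (a, b + 1)"
proof -
  have "hdual a b \<in> present \<omega> \<longleftrightarrow> even (a + b) \<and>
      \<omega> (a, b + 1) = \<omega> (a + 1, b + 1) \<and> \<omega> (a, b) = \<omega> (a + 1, b) \<and> \<omega> (a, b + 1) \<noteq> \<omega> (a, b)"
    unfolding present_def by auto
  then show ?thesis
    using Omega_allowed_face[OF assms, of a b] unfolding allowed_face_iff by auto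
qed

lemma vdual_in_present_iff:
  assumes "\<omega> \<in> Omega"
  shows "vdual a b \<in> present \<omega> \<longleftrightarrow> even (a + b) \<and> \<omega> (a, b) \<noteq> \<omega> (a + 1, b)"
proof -
  have "vdual a b \<in> present \<omega> \<longleftrightarrow> even (a + b) \<and>
      \<omega> (a, b) = \<omega> (a, b + 1) \<and> \<omega> (a + 1, b) = \<omega> (a + 1, b + 1) \<and> \<omega> (a, b) \<noteq> \<omega> (a + 1, b)"
    unfolding present_def by auto
  then show ?thesis
    using Omega_allowed_face[OF assms, of a b] unfolding allowed_face_iff by auto
qed

lemma present_cases:
  assumes "d \<in> present \<omega>"
  obtains a b where "even (a + b)" "d = hdual a b" | a b where "even (a + b)" "d = vdual a b"
  using assms unfolding present_def by blast

lemma finite_present_edge: "d \<in> present \<omega> \<Longrightarrow> finite d"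
  by (elim present_cases) (auto simp: hdual_def vdual_def)

lemma present_crosses_iff:
  assumes "\<omega> \<in> Omega" "adjG u v"
  shows "(\<exists>d\<in>present \<omega>. crosses d {u, v}) \<longleftrightarrow> \<omega> u \<noteq> \<omega> v"
  using assms(2)
proof (rule adjG_cases)
  fix u v :: vtx
  assume "(\<exists>d\<in>present \<omega>. crosses d {u, v}) \<longleftrightarrow> \<omega> u \<noteq> \<omega> v"
  then show "(\<exists>d\<in>present \<omega>. crosses d {v, u}) \<longleftrightarrow> \<omega> v \<noteq> \<omega> u"
    by (auto simp: insert_commute)
next
  fix i j
  have "odd (i + j) \<Longrightarrow> \<omega> (i, j - 1) \<noteq> \<omega> (i + 1, j - 1) \<longleftrightarrow> \<omega> (i, j) \<noteq> \<omega> (i + 1, j)"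
    using Omega_bottom_top_change_iff[OF assms(1), of i "j - 1"] by auto
  moreover have "(\<exists>d\<in>present \<omega>. crosses d {(i, j), (i + 1, j)}) \<longleftrightarrow>
      even (i + j) \<and> vdual i j \<in> present \<omega> \<or> odd (i + j) \<and> vdual i (j - 1) \<in> present \<omega>"
    unfolding crosses_horizontal_edge_iff by auto
  ultimately show "(\<exists>d\<in>present \<omega>. crosses d {(i, j), (i + 1, j)}) \<longleftrightarrow> \<omega> (i, j) \<noteq> \<omega> (i + 1, j)"
    unfolding vdual_in_present_iff[OF assms(1)] by auto
next
  fix i j
  have "odd (i + j) \<Longrightarrow> \<omega> (i - 1, j) \<noteq> \<omega> (i - 1, j + 1) \<longleftrightarrow> \<omega> (i, j) \<noteq> \<omega> (i, j + 1)"
    using Omega_left_right_change_iff[OF assms(1), of "i - 1" j] by auto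
  moreover have "(\<exists>d\<in>present \<omega>. crosses d {(i, j), (i, j + 1)}) \<longleftrightarrow>
      even (i + j) \<and> hdual i j \<in> present \<omega> \<or> odd (i + j) \<and> hdual (i - 1) j \<in> present \<omega>"
    unfolding crosses_vertical_edge_iff by auto
  ultimately show "(\<exists>d\<in>present \<omega>. crosses d {(i, j), (i, j + 1)}) \<longleftrightarrow> \<omega> (i, j) \<noteq> \<omega> (i, j + 1)"
    unfolding hdual_in_present_iff[OF assms(1)] by auto
qed

lemma card_guarded_four:
  assumes "distinct [x1, x2, x3, x4]"
  shows "card {d. d = x1 \<and> c1 \<or> d = x2 \<and> c2 \<or> d = x3 \<and> c3 \<or> d = x4 \<and> c4}
     = of_bool c1 + of_bool c2 + of_bool c3 + of_bool c4"
proof -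
  have "{d. d = x1 \<and> c1 \<or> d = x2 \<and> c2 \<or> d = x3 \<and> c3 \<or> d = x4 \<and> c4} =
      (if c1 then {x1} else {}) \<union> ((if c2 then {x2} else {}) \<union>
      ((if c3 then {x3} else {}) \<union> (if c4 then {x4} else {})))"
    by auto
  also have "card \<dots> = of_bool c1 + (of_bool c2 + (of_bool c3 + of_bool c4))"
    using assms by (auto simp: card_Un_disjoint)
  finally show ?thesis by simp
qed

lemma present_degree_even:
  assumes "\<omega> \<in> Omega"
  shows "even (card {d \<in> present \<omega>. q \<in> d})"
proof -
  obtain m n where q: "q = (m, n)" by fastforce
  have "q \<in> d \<longleftrightarrow> d = hdual m n \<or> d = hdual (m - 2) n \<or> d = vdual (m - 1) (n + 1) \<or>
      d = vdual (m - 1) (n - 1)" if "d \<in> present \<omega>" for d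
    using that by (elim present_cases) (auto simp: q mem_hdual_iff mem_vdual_iff)
  then have "{d \<in> present \<omega>. q \<in> d} = {d. d = hdual m n \<and> hdual m n \<in> present \<omega> \<or>
      d = hdual (m - 2) n \<and> hdual (m - 2) n \<in> present \<omega> \<or>
      d = vdual (m - 1) (n + 1) \<and> vdual (m - 1) (n + 1) \<in> present \<omega> \<or>
      d = vdual (m - 1) (n - 1) \<and> vdual (m - 1) (n - 1) \<in> present \<omega>}"
    by blast
  then have deg: "card {d \<in> present \<omega>. q \<in> d} =
      of_bool (hdual m n \<in> present \<omega>) + of_bool (hdual (m - 2) n \<in> present \<omega>) +
      of_bool (vdual (m - 1) (n + 1) \<in> present \<omega>) + of_bool (vdual (m - 1) (n - 1) \<in> present \<omega>)"
    by (simp add: card_guarded_four)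
  show ?thesis
  proof (cases "even (m + n)")
    case True
    \<comment> \<open>The four present-edge conditions are the four changes of \<open>\<omega>\<close> around the square with
      corners \<open>(m - 1, n)\<close> and \<open>(m, n + 1)\<close>, and a cyclic sequence changes an even number of times.\<close>
    have "hdual (m - 2) n \<in> present \<omega> \<longleftrightarrow> \<omega> (m - 1, n) \<noteq> \<omega> (m - 1, n + 1)"
      using True Omega_left_right_change_iff[OF assms, of "m - 2" n]
      by (simp add: hdual_in_present_iff[OF assms])
    moreover have "vdual (m - 1) (n - 1) \<in> present \<omega> \<longleftrightarrow> \<omega> (m - 1, n) \<noteq> \<omega> (m, n)"
      using True Omega_bottom_top_change_iff[OF assms, of "m - 1" "n - 1"]
      by (simp add: vdual_in_present_iff[OF assms])
    moreover have "hdual m n \<in> present \<omega> \<longleftrightarrow> \<omega> (m, n) \<noteq> \<omega> (m, n + 1)"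
      and "vdual (m - 1) (n + 1) \<in> present \<omega> \<longleftrightarrow> \<omega> (m - 1, n + 1) \<noteq> \<omega> (m, n + 1)"
      using True by (simp_all add: hdual_in_present_iff[OF assms] vdual_in_present_iff[OF assms])
    ultimately show ?thesis
      unfolding deg
      by (cases "\<omega> (m, n)"; cases "\<omega> (m, n + 1)"; cases "\<omega> (m - 1, n)";
          cases "\<omega> (m - 1, n + 1)") simp_all
  next
    case False
    then show ?thesis
      unfolding deg hdual_in_present_iff[OF assms] vdual_in_present_iff[OF assms] by auto
  qed
qed

lemma even_sum_card_Int_if_even_degrees:
  assumes "finite K" "\<And>d. d \<in> K \<Longrightarrow> finite d"
    and "\<And>q. q \<in> \<Union>K \<Longrightarrow> even (card {d \<in> K. q \<in> d})"
  shows "even (\<Sum>d\<in>K. card (d \<inter> Q))"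
proof -
  let ?V = "\<Union>K \<inter> Q"
  have fin: "finite ?V" using assms(1,2) by auto
  have "(\<Sum>d\<in>K. card (d \<inter> Q)) = (\<Sum>d\<in>K. \<Sum>q\<in>?V. of_bool (q \<in> d))"
  proof (rule sum.cong[OF refl])
    fix d assume "d \<in> K"
    then have "?V \<inter> {q. q \<in> d} = d \<inter> Q" by auto
    then show "card (d \<inter> Q) = (\<Sum>q\<in>?V. of_bool (q \<in> d))" using fin by simp
  qed
  also have "\<dots> = (\<Sum>q\<in>?V. \<Sum>d\<in>K. of_bool (q \<in> d))" by (rule sum.swap)
  also have "\<dots> = (\<Sum>q\<in>?V. card {d \<in> K. q \<in> d})"
  proof (rule sum.cong[OF refl])
    fix q
    have "K \<inter> {d. q \<in> d} = {d \<in> K. q \<in> d}" by auto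
    then show "(\<Sum>d\<in>K. of_bool (q \<in> d)) = card {d \<in> K. q \<in> d}" using assms(1) by simp
  qed
  finally show ?thesis using assms(3) by (auto intro!: dvd_sum)
qed

definition closed_finite_edges :: "(vtx \<Rightarrow> bool) \<Rightarrow> vtx set set \<Rightarrow> bool" where
  "closed_finite_edges \<omega> K \<longleftrightarrow> K \<subseteq> present \<omega> \<and> finite K \<and>
     (\<forall>d\<in>K. \<forall>d'\<in>present \<omega>. d \<inter> d' \<noteq> {} \<longrightarrow> d' \<in> K)"

definition right_vduals :: "vtx set set \<Rightarrow> int \<Rightarrow> int \<Rightarrow> vtx set set" where
  "right_vduals K i b = {d \<in> K. \<exists>a \<ge> i. d = vdual a b}"

text \<open>The edge of \<open>G\<close> from \<open>(a, b)\<close> to \<open>(a + 1, b)\<close> can only be crossed by \<open>vdual a b\<close> or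
  \<open>vdual a (b - 1)\<close>, so this is the parity of the number of edges of \<open>K\<close> crossing the
  horizontal ray from \<open>u\<close> to the right.\<close>

definition ray_parity :: "vtx set set \<Rightarrow> vtx \<Rightarrow> bool" where
  "ray_parity K u \<longleftrightarrow>
     odd (card (right_vduals K (fst u) (snd u)) + card (right_vduals K (fst u) (snd u - 1)))"

lemma closed_finite_edges_degree_even:
  assumes "\<omega> \<in> Omega" "closed_finite_edges \<omega> K" "q \<in> \<Union>K"
  shows "even (card {d \<in> K. q \<in> d})"
proof -
  have "{d \<in> K. q \<in> d} = {d \<in> present \<omega>. q \<in> d}"
    using assms(2,3) unfolding closed_finite_edges_def by blast
  then show ?thesis using present_degree_even[OF assms(1)] by simp
qed

lemma closed_finite_edges_parity:
  assumes "\<omega> \<in> Omega" "closed_finite_edges \<omega> K"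
  shows "hdual a b \<in> K \<Longrightarrow> even (a + b)" and "vdual a b \<in> K \<Longrightarrow> even (a + b)"
proof -
  have "K \<subseteq> present \<omega>" using assms(2) unfolding closed_finite_edges_def by simp
  then show "hdual a b \<in> K \<Longrightarrow> even (a + b)" and "vdual a b \<in> K \<Longrightarrow> even (a + b)"
    using hdual_in_present_iff[OF assms(1)] vdual_in_present_iff[OF assms(1)] by blast+
qed

lemma card_right_vduals:
  assumes "finite K"
  shows "card (right_vduals K i b) = card (right_vduals K (i + 1) b) + of_bool (vdual i b \<in> K)"
proof -
  have "right_vduals K i b = right_vduals K (i + 1) b \<union> (if vdual i b \<in> K then {vdual i b} else {})"
  proof (intro set_eqI iffI)
    fix d assume "d \<in> right_vduals K i b"
    then obtain a where a: "d \<in> K" "a \<ge> i" "d = vdual a b" unfolding right_vduals_def by blast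
    then have "a = i \<or> a \<ge> i + 1" by arith
    then show "d \<in> right_vduals K (i + 1) b \<union> (if vdual i b \<in> K then {vdual i b} else {})"
      using a unfolding right_vduals_def by auto
  qed (auto simp: right_vduals_def split: if_splits)
  moreover have "finite (right_vduals K (i + 1) b)" "vdual i b \<notin> right_vduals K (i + 1) b"
    using assms unfolding right_vduals_def by auto
  ultimately show ?thesis by simp
qed

lemma ray_parity_horizontal_step:
  assumes "\<omega> \<in> Omega" "closed_finite_edges \<omega> K"
  shows "ray_parity K (i, j) \<noteq> ray_parity K (i + 1, j) \<longleftrightarrow> (\<exists>d\<in>K. crosses d {(i, j), (i + 1, j)})"
proof -
  have "finite K" using assms(2) unfolding closed_finite_edges_def by auto
  have "(\<exists>d\<in>K. crosses d {(i, j), (i + 1, j)}) \<longleftrightarrow>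
      even (i + j) \<and> vdual i j \<in> K \<or> odd (i + j) \<and> vdual i (j - 1) \<in> K"
    unfolding crosses_horizontal_edge_iff by auto
  moreover have "vdual i j \<in> K \<Longrightarrow> even (i + j)" "vdual i (j - 1) \<in> K \<Longrightarrow> odd (i + j)"
    using closed_finite_edges_parity(2)[OF assms, of i j]
      closed_finite_edges_parity(2)[OF assms, of i "j - 1"] by auto
  ultimately show ?thesis
    unfolding ray_parity_def fst_conv snd_conv card_right_vduals[OF \<open>finite K\<close>, of i j]
      card_right_vduals[OF \<open>finite K\<close>, of i "j - 1"]
    by auto
qed

lemma card_doubleton_Int: "u \<noteq> v \<Longrightarrow> card ({u, v} \<inter> Q) = of_bool (u \<in> Q) + of_bool (v \<in> Q)"
  by (cases "u \<in> Q"; cases "v \<in> Q") auto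

lemma odd_card_Int_right_row_iff:
  assumes "closed_finite_edges \<omega> K" "d \<in> K"
  shows "odd (card (d \<inter> {p. snd p = j \<and> fst p \<ge> i + 1})) \<longleftrightarrow>
     d \<in> right_vduals K i (j - 1) \<or> d \<in> right_vduals K i (j + 1) \<or> d = hdual i j \<or> d = hdual (i - 1) j"
proof -
  have "d \<in> present \<omega>" using assms unfolding closed_finite_edges_def by auto
  then show ?thesis
  proof (cases rule: present_cases)
    case (1 a b)
    have "card (d \<inter> {p. snd p = j \<and> fst p \<ge> i + 1}) = of_bool (b = j \<and> a \<ge> i + 1) + of_bool (b = j \<and> a + 2 \<ge> i + 1)"
      unfolding 1 hdual_def by (subst card_doubleton_Int) auto
    then show ?thesis unfolding 1 right_vduals_def by auto
  next
    case (2 a b)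
    have "card (d \<inter> {p. snd p = j \<and> fst p \<ge> i + 1}) = of_bool (b - 1 = j \<and> a \<ge> i) + of_bool (b + 1 = j \<and> a \<ge> i)"
      unfolding 2 vdual_def by (subst card_doubleton_Int) auto
    then show ?thesis unfolding 2 right_vduals_def using assms(2) 2 by auto
  qed
qed

lemma ray_parity_vertical_step:
  assumes "\<omega> \<in> Omega" "closed_finite_edges \<omega> K"
  shows "ray_parity K (i, j) \<noteq> ray_parity K (i, j + 1) \<longleftrightarrow> (\<exists>d\<in>K. crosses d {(i, j), (i, j + 1)})"
proof -
  have fin: "finite K" and "K \<subseteq> present \<omega>"
    using assms(2) unfolding closed_finite_edges_def by auto
  let ?Q = "{p. snd p = j \<and> fst p \<ge> i + 1}"
  let ?H = "{d \<in> K. d = hdual i j \<or> d = hdual (i - 1) j}"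
  \<comment> \<open>Handshake on the dual vertices of row \<open>j\<close> to the right of the vertical edge.\<close>
  have "even (\<Sum>d\<in>K. card (d \<inter> ?Q))"
    using fin \<open>K \<subseteq> present \<omega>\<close> finite_present_edge closed_finite_edges_degree_even[OF assms]
    by (intro even_sum_card_Int_if_even_degrees) auto
  then have even_odd_edges: "even (card {d \<in> K. odd (card (d \<inter> ?Q))})"
    using even_sum_iff[OF fin, of "\<lambda>d. card (d \<inter> ?Q)"] by blast
  have odd_edges: "{d \<in> K. odd (card (d \<inter> ?Q))} =
      right_vduals K i (j - 1) \<union> (right_vduals K i (j + 1) \<union> ?H)"
    using odd_card_Int_right_row_iff[OF assms(2)] unfolding right_vduals_def by blast
  have card_H: "card ?H = of_bool (hdual i j \<in> K) + of_bool (hdual (i - 1) j \<in> K)"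
  proof -
    have "?H = (if hdual i j \<in> K then {hdual i j} else {}) \<union>
        (if hdual (i - 1) j \<in> K then {hdual (i - 1) j} else {})"
      by auto
    then show ?thesis by simp
  qed
  have "finite (right_vduals K i b)" for b
    using fin unfolding right_vduals_def by auto
  moreover have "right_vduals K i (j - 1) \<inter> (right_vduals K i (j + 1) \<union> ?H) = {}"
    and "right_vduals K i (j + 1) \<inter> ?H = {}"
    unfolding right_vduals_def by auto
  ultimately have card_odd_edges: "card {d \<in> K. odd (card (d \<inter> ?Q))} =
      card (right_vduals K i (j - 1)) + card (right_vduals K i (j + 1)) +
      of_bool (hdual i j \<in> K) + of_bool (hdual (i - 1) j \<in> K)"
    unfolding odd_edges using fin card_H by (simp add: card_Un_disjoint)
  have crossing: "(\<exists>d\<in>K. crosses d {(i, j), (i, j + 1)}) \<longleftrightarrow>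
      even (i + j) \<and> hdual i j \<in> K \<or> odd (i + j) \<and> hdual (i - 1) j \<in> K"
    unfolding crosses_vertical_edge_iff by auto
  have "hdual i j \<in> K \<Longrightarrow> even (i + j)" "hdual (i - 1) j \<in> K \<Longrightarrow> odd (i + j)"
    using closed_finite_edges_parity(1)[OF assms, of i j]
      closed_finite_edges_parity(1)[OF assms, of "i - 1" j] by auto
  then show ?thesis
    unfolding crossing ray_parity_def fst_conv snd_conv using even_odd_edges card_odd_edges by auto
qed

lemma ray_parity_change_iff:
  assumes "\<omega> \<in> Omega" "closed_finite_edges \<omega> K" "adjG u v"
  shows "ray_parity K u \<noteq> ray_parity K v \<longleftrightarrow> (\<exists>d\<in>K. crosses d {u, v})"
  using assms(3)
proof (rule adjG_cases)
  fix u v :: vtx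
  assume "ray_parity K u \<noteq> ray_parity K v \<longleftrightarrow> (\<exists>d\<in>K. crosses d {u, v})"
  then show "ray_parity K v \<noteq> ray_parity K u \<longleftrightarrow> (\<exists>d\<in>K. crosses d {v, u})"
    by (auto simp: insert_commute)
qed (use ray_parity_horizontal_step[OF assms(1,2)] ray_parity_vertical_step[OF assms(1,2)] in auto)

lemma finite_vtx_set_bounded: "finite (V :: vtx set) \<Longrightarrow> \<exists>R. \<forall>p\<in>V. \<bar>fst p\<bar> \<le> R \<and> \<bar>snd p\<bar> \<le> R"
proof (induction V rule: finite_induct)
  case (insert x F)
  then obtain R where "\<forall>p\<in>F. \<bar>fst p\<bar> \<le> R \<and> \<bar>snd p\<bar> \<le> R" by blast
  then show ?case by (intro exI[of _ "max R (max \<bar>fst x\<bar> \<bar>snd x\<bar>)"]) auto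
qed simp

lemma infinite_vtx_set_unbounded:
  assumes "infinite (S :: vtx set)"
  obtains z where "z \<in> S" "\<bar>fst z\<bar> > B \<or> \<bar>snd z\<bar> > B"
proof -
  have "\<not> S \<subseteq> {-B..B} \<times> {-B..B}" using assms finite_subset by blast
  then show ?thesis using that by force
qed

lemma ray_parity_right_or_above_or_below:
  assumes "\<forall>p\<in>\<Union>K. \<bar>fst p\<bar> \<le> R \<and> \<bar>snd p\<bar> \<le> R" "\<bar>snd z\<bar> > R + 2 \<or> fst z > R"
  shows "\<not> ray_parity K z"
proof -
  have "right_vduals K (fst z) b = {}" if "b = snd z \<or> b = snd z - 1" for b
  proof (rule ccontr)
    assume "right_vduals K (fst z) b \<noteq> {}"
    then obtain a where a: "vdual a b \<in> K" "a \<ge> fst z" unfolding right_vduals_def by blast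
    then have "(a + 1, b - 1) \<in> \<Union>K" "(a + 1, b + 1) \<in> \<Union>K" unfolding vdual_def by auto
    then have "\<bar>a + 1\<bar> \<le> R" "\<bar>b - 1\<bar> \<le> R" "\<bar>b + 1\<bar> \<le> R" using assms(1) by fastforce+
    then show False using a(2) assms(2) that by arith
  qed
  then show ?thesis unfolding ray_parity_def by simp
qed

lemma ray_parity_far:
  assumes "\<omega> \<in> Omega" "closed_finite_edges \<omega> K"
    and "\<forall>p\<in>\<Union>K. \<bar>fst p\<bar> \<le> R \<and> \<bar>snd p\<bar> \<le> R" "\<bar>fst z\<bar> > R + 2 \<or> \<bar>snd z\<bar> > R + 2"
  shows "\<not> ray_parity K z"
proof (cases "\<bar>snd z\<bar> > R + 2 \<or> fst z > R")
  case True
  then show ?thesis using ray_parity_right_or_above_or_below[OF assms(3)] by blast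
next
  case False
  obtain i j where z: "z = (i, j)" by fastforce
  with False assms(4) have left: "i < - R - 2" by auto
  \<comment> \<open>To the left of \<open>K\<close> no vertical edge of \<open>G\<close> is crossed by \<open>K\<close>, so move up until above \<open>K\<close>.\<close>
  have up: "ray_parity K (i, j') = ray_parity K (i, j' + 1)" for j'
  proof -
    have "\<not> (\<exists>d\<in>K. crosses d {(i, j'), (i, j' + 1)})"
    proof
      assume "\<exists>d\<in>K. crosses d {(i, j'), (i, j' + 1)}"
      then have "hdual i j' \<in> K \<or> hdual (i - 1) j' \<in> K"
        unfolding crosses_vertical_edge_iff by auto
      then have "(i, j') \<in> \<Union>K \<or> (i - 1, j') \<in> \<Union>K" unfolding hdual_def by auto
      then show False using assms(3) left by fastforce
    qed
    then show ?thesis using ray_parity_vertical_step[OF assms(1,2)] by blast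
  qed
  have shift: "ray_parity K (i, j) = ray_parity K (i, j + int k)" for k
  proof (induction k)
    case (Suc k)
    have "j + int (Suc k) = (j + int k) + 1" by simp
    then show ?case using Suc.IH up[of "j + int k"] by (simp only:)
  qed simp
  have "\<not> ray_parity K (i, j + int (nat (\<bar>j\<bar> + \<bar>R\<bar> + 3)))"
    by (rule ray_parity_right_or_above_or_below[OF assms(3)]) auto
  then show ?thesis using z shift[of "nat (\<bar>j\<bar> + \<bar>R\<bar> + 3)"] by simp
qed

lemma ray_parity_cluster_eq:
  assumes "\<omega> \<in> Omega" "closed_finite_edges \<omega> K" "z \<in> cluster \<omega> x"
  shows "ray_parity K z = ray_parity K x"
proof -
  have KP: "K \<subseteq> present \<omega>" using assms(2) unfolding closed_finite_edges_def by auto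
  from assms(3) have "(\<lambda>u v. adjG u v \<and> \<omega> u = \<omega> v)\<^sup>*\<^sup>* x z" unfolding cluster_def by simp
  then show ?thesis
  proof (induction rule: rtranclp_induct)
    case (step u v)
    then have "\<not> (\<exists>d\<in>K. crosses d {u, v})" using present_crosses_iff[OF assms(1)] KP by blast
    then show ?case using ray_parity_change_iff[OF assms(1,2)] step by blast
  qed simp
qed

lemma ray_parity_infinite_cluster:
  assumes "\<omega> \<in> Omega" "closed_finite_edges \<omega> K" "in_infinite_cluster \<omega> s x"
  shows "\<not> ray_parity K x"
proof -
  have "finite K" "K \<subseteq> present \<omega>" using assms(2) unfolding closed_finite_edges_def by auto
  then have "finite (\<Union>K)" using finite_present_edge by blast
  then obtain R where R: "\<forall>p\<in>\<Union>K. \<bar>fst p\<bar> \<le> R \<and> \<bar>snd p\<bar> \<le> R" using finite_vtx_set_bounded by blast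
  from assms(3) have "infinite (cluster \<omega> x)" unfolding in_infinite_cluster_def by simp
  then obtain z where "z \<in> cluster \<omega> x" "\<bar>fst z\<bar> > R + 2 \<or> \<bar>snd z\<bar> > R + 2"
    by (rule infinite_vtx_set_unbounded)
  then show ?thesis using ray_parity_far[OF assms(1,2) R] ray_parity_cluster_eq[OF assms(1,2)] by metis
qed

lemma contour_subset_present: "d \<in> present \<omega> \<Longrightarrow> contour \<omega> d \<subseteq> present \<omega>"
proof
  fix f assume "d \<in> present \<omega>" "f \<in> contour \<omega> d"
  then have "(\<lambda>g h. g \<in> present \<omega> \<and> h \<in> present \<omega> \<and> g \<inter> h \<noteq> {})\<^sup>*\<^sup>* d f" "d \<in> present \<omega>"
    unfolding contour_def by simp_all
  then show "f \<in> present \<omega>" by (induction rule: rtranclp_induct) auto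
qed

lemma contour_mono: "f \<in> contour \<omega> d \<Longrightarrow> contour \<omega> f \<subseteq> contour \<omega> d"
  unfolding contour_def by (auto intro: rtranclp_trans)

lemma closed_finite_edges_Union_contours:
  assumes "finite D" "D \<subseteq> present \<omega>" "\<And>d. d \<in> D \<Longrightarrow> finite (contour \<omega> d)"
  shows "closed_finite_edges \<omega> (\<Union>(contour \<omega> ` D))"
  unfolding closed_finite_edges_def
proof (intro conjI ballI impI)
  show "\<Union>(contour \<omega> ` D) \<subseteq> present \<omega>" using assms(2) contour_subset_present by blast
  show "finite (\<Union>(contour \<omega> ` D))" using assms(1,3) by blast
next
  fix f f' assume "f \<in> \<Union>(contour \<omega> ` D)" "f' \<in> present \<omega>" "f \<inter> f' \<noteq> {}"
  moreover from this obtain d where "d \<in> D" "f \<in> contour \<omega> d" by blast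
  moreover have "f \<in> present \<omega>" using calculation assms(2) contour_subset_present by blast
  ultimately show "f' \<in> \<Union>(contour \<omega> ` D)"
    unfolding contour_def by (auto intro: rtranclp.rtrancl_into_rtrancl)
qed

definition count_steps :: "(vtx \<Rightarrow> vtx \<Rightarrow> bool) \<Rightarrow> vtx list \<Rightarrow> nat" where
  "count_steps c xs = card {i. Suc i < length xs \<and> c (xs ! i) (xs ! Suc i)}"

lemma count_steps_Cons_Cons: "count_steps c (x # y # ys) = of_bool (c x y) + count_steps c (y # ys)"
proof -
  let ?A = "{i. Suc i < length (y # ys) \<and> c ((y # ys) ! i) ((y # ys) ! Suc i)}"
  have "{i. Suc i < length (x # y # ys) \<and> c ((x # y # ys) ! i) ((x # y # ys) ! Suc i)} =
      (if c x y then {0} else {}) \<union> Suc ` ?A"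
    by (auto simp: image_iff less_Suc_eq_0_disj split: if_splits)
  moreover have "finite ?A" by (rule finite_subset[of _ "{..<length (y # ys)}"]) auto
  ultimately show ?thesis unfolding count_steps_def by (simp add: card_image)
qed

lemma odd_count_steps_change_iff:
  "xs \<noteq> [] \<Longrightarrow> odd (count_steps (\<lambda>u v. g u \<noteq> (g v :: bool)) xs) \<longleftrightarrow> g (hd xs) \<noteq> g (last xs)"
proof (induction xs rule: induct_list012)
  case (2 x)
  then show ?case by (simp add: count_steps_def)
next
  case (3 x y ys)
  then show ?case
    unfolding count_steps_Cons_Cons by (cases "g x"; cases "g y"; cases "g (last (y # ys))") auto
qed simp

lemma count_steps_disj:
  assumes "\<And>i. Suc i < length xs \<Longrightarrow> c (xs ! i) (xs ! Suc i) \<longleftrightarrow> c1 (xs ! i) (xs ! Suc i) \<or> c2 (xs ! i) (xs ! Suc i)"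
    and "\<And>i. Suc i < length xs \<Longrightarrow> \<not> (c1 (xs ! i) (xs ! Suc i) \<and> c2 (xs ! i) (xs ! Suc i))"
  shows "count_steps c xs = count_steps c1 xs + count_steps c2 xs"
proof -
  let ?A = "{i. Suc i < length xs \<and> c1 (xs ! i) (xs ! Suc i)}"
  let ?B = "{i. Suc i < length xs \<and> c2 (xs ! i) (xs ! Suc i)}"
  have "{i. Suc i < length xs \<and> c (xs ! i) (xs ! Suc i)} = ?A \<union> ?B" using assms(1) by auto
  moreover have "finite ?A" "finite ?B" by (rule finite_subset[of _ "{..<length xs}"], auto)+
  moreover have "?A \<inter> ?B = {}" using assms(2) by auto
  ultimately show ?thesis unfolding count_steps_def by (simp add: card_Un_disjoint)
qed

lemma Gpath_adjG: "Gpath xs \<Longrightarrow> Suc i < length xs \<Longrightarrow> adjG (xs ! i) (xs ! Suc i)"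
  unfolding Gpath_def by blast

lemma finite_contours_crossed_by_path:
  assumes "Gpath xs"
  obtains K where "closed_finite_edges \<omega> K"
    and "\<And>i. Suc i < length xs \<Longrightarrow> (\<exists>d\<in>K. crosses d {xs ! i, xs ! Suc i}) \<longleftrightarrow>
           (\<exists>d\<in>present \<omega>. \<not> in_infinite_contour \<omega> d \<and> crosses d {xs ! i, xs ! Suc i})"
proof
  define D where "D = {d \<in> present \<omega>. \<not> in_infinite_contour \<omega> d \<and>
      (\<exists>i. Suc i < length xs \<and> crosses d {xs ! i, xs ! Suc i})}"
  have "D \<subseteq> (\<Union>i\<in>{i. Suc i < length xs}. {d. crosses d {xs ! i, xs ! Suc i}})"
    unfolding D_def by auto
  moreover have "finite {i. Suc i < length xs}" by (rule finite_subset[of _ "{..<length xs}"]) auto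
  then have "finite (\<Union>i\<in>{i. Suc i < length xs}. {d. crosses d {xs ! i, xs ! Suc i}})"
    by (rule finite_UN_I) (use finite_crossing_duals Gpath_adjG[OF assms] in auto)
  ultimately have "finite D" by (rule finite_subset)
  moreover have finite_contours: "finite (contour \<omega> d)" if "d \<in> D" for d
    using that unfolding D_def in_infinite_contour_def by auto
  ultimately show "closed_finite_edges \<omega> (\<Union>(contour \<omega> ` D))"
    by (intro closed_finite_edges_Union_contours) (auto simp: D_def)
  fix i assume i: "Suc i < length xs"
  show "(\<exists>d\<in>\<Union>(contour \<omega> ` D). crosses d {xs ! i, xs ! Suc i}) \<longleftrightarrow>
      (\<exists>d\<in>present \<omega>. \<not> in_infinite_contour \<omega> d \<and> crosses d {xs ! i, xs ! Suc i})"
  proof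
    assume "\<exists>d\<in>\<Union>(contour \<omega> ` D). crosses d {xs ! i, xs ! Suc i}"
    then obtain f d where f: "d \<in> D" "f \<in> contour \<omega> d" "crosses f {xs ! i, xs ! Suc i}" by blast
    then have "f \<in> present \<omega>" using contour_subset_present unfolding D_def by blast
    moreover have "finite (contour \<omega> f)"
      using contour_mono[OF f(2)] finite_contours[OF f(1)] by (rule finite_subset)
    ultimately show "\<exists>d\<in>present \<omega>. \<not> in_infinite_contour \<omega> d \<and> crosses d {xs ! i, xs ! Suc i}"
      using f(3) unfolding in_infinite_contour_def by blast
  next
    assume "\<exists>d\<in>present \<omega>. \<not> in_infinite_contour \<omega> d \<and> crosses d {xs ! i, xs ! Suc i}"
    then obtain d where "d \<in> D" "crosses d {xs ! i, xs ! Suc i}" unfolding D_def using i by blast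
    moreover have "d \<in> contour \<omega> d" unfolding contour_def by simp
    ultimately show "\<exists>d\<in>\<Union>(contour \<omega> ` D). crosses d {xs ! i, xs ! Suc i}" by blast
  qed
qed

lemma odd_inf_crossings:
  assumes "\<omega> \<in> Omega" "in_infinite_cluster \<omega> False x" "in_infinite_cluster \<omega> True y"
    and "Gpath xs" "hd xs = x" "last xs = y"
  shows "odd (inf_crossings \<omega> xs)"
proof -
  obtain K where K: "closed_finite_edges \<omega> K"
    and K_crossings: "\<And>i. Suc i < length xs \<Longrightarrow> (\<exists>d\<in>K. crosses d {xs ! i, xs ! Suc i}) \<longleftrightarrow>
      (\<exists>d\<in>present \<omega>. \<not> in_infinite_contour \<omega> d \<and> crosses d {xs ! i, xs ! Suc i})"
    using finite_contours_crossed_by_path[OF assms(4)] by blast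
  have xs: "xs \<noteq> []" using assms(4) unfolding Gpath_def by simp
  have "inf_crossings \<omega> xs = count_steps (\<lambda>u v. \<exists>d. in_infinite_contour \<omega> d \<and> crosses d {u, v}) xs"
    unfolding inf_crossings_def count_steps_def by simp
  \<comment> \<open>Each change of \<open>\<omega>\<close> is crossed by exactly one present edge, in an infinite contour or in \<open>K\<close>.\<close>
  moreover have "count_steps (\<lambda>u v. \<omega> u \<noteq> \<omega> v) xs =
      count_steps (\<lambda>u v. \<exists>d. in_infinite_contour \<omega> d \<and> crosses d {u, v}) xs +
      count_steps (\<lambda>u v. ray_parity K u \<noteq> ray_parity K v) xs"
  proof (rule count_steps_disj)
    fix i assume i: "Suc i < length xs"
    note adj = Gpath_adjG[OF assms(4) i]
    show "\<omega> (xs ! i) \<noteq> \<omega> (xs ! Suc i) \<longleftrightarrow>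
        (\<exists>d. in_infinite_contour \<omega> d \<and> crosses d {xs ! i, xs ! Suc i}) \<or>
        ray_parity K (xs ! i) \<noteq> ray_parity K (xs ! Suc i)"
      using present_crosses_iff[OF assms(1) adj] K_crossings[OF i]
        ray_parity_change_iff[OF assms(1) K adj] unfolding in_infinite_contour_def by blast
    show "\<not> ((\<exists>d. in_infinite_contour \<omega> d \<and> crosses d {xs ! i, xs ! Suc i}) \<and>
        ray_parity K (xs ! i) \<noteq> ray_parity K (xs ! Suc i))"
      using crosses_unique[OF adj] K_crossings[OF i] ray_parity_change_iff[OF assms(1) K adj] by blast
  qed
  moreover have "odd (count_steps (\<lambda>u v. \<omega> u \<noteq> \<omega> v) xs)"
    using odd_count_steps_change_iff[OF xs] assms(2,3,5,6) unfolding in_infinite_cluster_def by simp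
  moreover have "even (count_steps (\<lambda>u v. ray_parity K u \<noteq> ray_parity K v) xs)"
    using odd_count_steps_change_iff[OF xs] ray_parity_infinite_cluster[OF assms(1) K]
      assms(2,3,5,6) by blast
  ultimately show ?thesis by simp
qed

lemma Gpath_Cons:
  assumes "Gpath ys" "adjG u (hd ys)"
  shows "Gpath (u # ys)"
  unfolding Gpath_def
proof (intro conjI allI impI)
  fix i assume i: "Suc i < length (u # ys)"
  show "adjG ((u # ys) ! i) ((u # ys) ! Suc i)"
  proof (cases i)
    case 0
    then show ?thesis using assms by (cases ys) (auto simp: Gpath_def)
  next
    case (Suc k)
    then show ?thesis using assms i by (auto simp: Gpath_def)
  qed
qed simp

lemma Gpath_exists: "\<exists>xs. Gpath xs \<and> hd xs = u \<and> last xs = v"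
proof (induction "nat (\<bar>fst u - fst v\<bar> + \<bar>snd u - snd v\<bar>)" arbitrary: u rule: less_induct)
  case less
  show ?case
  proof (cases "u = v")
    case True
    then show ?thesis by (intro exI[of _ "[u]"]) (auto simp: Gpath_def)
  next
    case False
    obtain a b where u: "u = (a, b)" by fastforce
    define w where "w = (if a < fst v then (a + 1, b) else if fst v < a then (a - 1, b)
      else if b < snd v then (a, b + 1) else (a, b - 1))"
    have "adjG u w" unfolding w_def u adjG_def by auto
    moreover have "nat (\<bar>fst w - fst v\<bar> + \<bar>snd w - snd v\<bar>) < nat (\<bar>fst u - fst v\<bar> + \<bar>snd u - snd v\<bar>)"
      using False unfolding w_def u by (auto simp: prod_eq_iff)
    then obtain ys where "Gpath ys" "hd ys = w" "last ys = v" using less by blast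
    moreover then have "ys \<noteq> []" unfolding Gpath_def by simp
    ultimately show ?thesis by (intro exI[of _ "u # ys"]) (auto intro: Gpath_Cons)
  qed
qed

theorem lemma2p8:
  fixes \<omega> :: "int \<times> int \<Rightarrow> bool"
  assumes "\<omega> \<in> Omega"
  shows "(\<forall>x y xs. in_infinite_cluster \<omega> False x \<and> in_infinite_cluster \<omega> True y \<and>
            Gpath xs \<and> hd xs = x \<and> last xs = y \<longrightarrow> odd (inf_crossings \<omega> xs))
       \<and> ((\<exists>x. in_infinite_cluster \<omega> False x) \<and> (\<exists>y. in_infinite_cluster \<omega> True y)
            \<longrightarrow> (\<exists>e. in_infinite_contour \<omega> e))"
proof (intro conjI allI impI)
  fix x y xs
  assume "in_infinite_cluster \<omega> False x \<and> in_infinite_cluster \<omega> True y \<and>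
    Gpath xs \<and> hd xs = x \<and> last xs = y"
  then show "odd (inf_crossings \<omega> xs)" using odd_inf_crossings[OF assms] by blast
next
  assume "(\<exists>x. in_infinite_cluster \<omega> False x) \<and> (\<exists>y. in_infinite_cluster \<omega> True y)"
  then obtain x y where "in_infinite_cluster \<omega> False x" "in_infinite_cluster \<omega> True y" by blast
  moreover obtain xs where "Gpath xs" "hd xs = x" "last xs = y" using Gpath_exists by blast
  ultimately have "odd (inf_crossings \<omega> xs)" using odd_inf_crossings[OF assms] by blast
  then have "inf_crossings \<omega> xs \<noteq> 0" by (intro notI) simp
  then have "{i. Suc i < length xs \<and>
      (\<exists>d. in_infinite_contour \<omega> d \<and> crosses d {xs ! i, xs ! Suc i})} \<noteq> {}"
    unfolding inf_crossings_def by (metis card.empty)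
  then show "\<exists>e. in_infinite_contour \<omega> e" by blast
qed

end
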